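(* Let $G=(V,E)$ be a directed graph in which every node has at least one out-neighbour, let $\alpha\in(0,1)$, let $s\in V$, let $r_{max}>0$ and let $\omega>0$. Run the FORA estimator described in the context with these parameters, producing estimates $\hat{\pi}(s,t)$, $t\in V$, and let $r_{sum}$ be the total residue left by Forward Push. Then for every node $t\in V$, every $\epsilon>0$ and every $\lambda>0$, \[ \Pr\big[|\pi(s,t)-\hat{\pi}(s,t)|\ge \epsilon\cdot\pi(s,t)\big]\le 2\exp\!\left(-\frac{\epsilon^2\cdot\omega\cdot\pi(s,t)}{r_{sum}\,(2+2\epsilon/3)}\right), \] \[ \Pr\big[|\pi(s,t)-\hat{\pi}(s,t)|\ge \lambda\big]\le 2\exp\!\left(-\frac{\lambda^2\cdot\omega}{r_{sum}\,(2\pi(s,t)+2\lambda/3)}\right). \]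
   Context: Random walk with restart from a node $u$: starting at $u$, at each step the walk terminates at the current node with probability $\alpha$, and otherwise moves to an out-neighbour of the current node chosen uniformly at random. The personalized PageRank $\pi(u,t)$ is the probability that such a walk from $u$ terminates at $t$. $N^{out}(v)$ denotes the set of out-neighbours of $v$. Forward Push (source $s$, threshold $r_{max}$): initialise residues $r(s,s)=1$, $r(s,v)=0$ for $v\neq s$, and reserves $\pi^\circ(s,v)=0$ for all $v$. While some node $v$ has $r(s,v)/|N^{out}(v)|>r_{max}$, pick such a $v$; for each $u\in N^{out}(v)$ increase $r(s,u)$ by $(1-\alpha)r(s,v)/|N^{out}(v)|$; increase $\pi^\circ(s,v)$ by $\alpha\, r(s,v)$; set $r(s,v)=0$. Output all reserves and residues. FORA estimator (parameter $\omega>0$): run Forward Push, let $r_{sum}=\sum_{v\in V} r(s,v)$, and set $\hat{\pi}(s,v)=\pi^\circ(s,v)$ for all $v$. For each node $v_i$ with $r(s,v_i)>0$, let $\omega_i=\lceil r(s,v_i)\,\omega/r_{sum}\rceil$ and $a_i=\frac{r(s,v_i)}{r_{sum}}\cdot\frac{\omega}{\omega_i}$; generate $\omega_i$ independent random walks with restart from $v_i$, and for each such walk, if it terminates at node $t$, increase $\hat{\pi}(s,t)$ by $a_i\, r_{sum}/\omega$. Return $\hat{\pi}(s,v)$ for all $v\in V$. Probabilities are over the random walks. *)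

theory Defs
  imports "HOL-Probability.Probability"
begin

definition digraph_ok :: "'a set \<Rightarrow> ('a \<Rightarrow> 'a set) \<Rightarrow> bool" where
  "digraph_ok V N \<longleftrightarrow> finite V \<and> (\<forall>v\<in>V. N v \<subseteq> V \<and> N v \<noteq> {})"

primrec walk_pmf :: "('a \<Rightarrow> 'a set) \<Rightarrow> nat \<Rightarrow> 'a \<Rightarrow> 'a pmf" where
  "walk_pmf N 0 u = return_pmf u"
| "walk_pmf N (Suc k) u = bind_pmf (pmf_of_set (N u)) (\<lambda>w. walk_pmf N k w)"

text \<open>Random walk with restart from u: the walk stops at each step with probability alpha,
  so the number of moves before termination is geometric(alpha).  This is the
  distribution of the terminal node.\<close>
definition rwr_pmf :: "('a \<Rightarrow> 'a set) \<Rightarrow> real \<Rightarrow> 'a \<Rightarrow> 'a pmf" where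
  "rwr_pmf N \<alpha> u = bind_pmf (geometric_pmf \<alpha>) (\<lambda>k. walk_pmf N k u)"

definition ppr :: "('a \<Rightarrow> 'a set) \<Rightarrow> real \<Rightarrow> 'a \<Rightarrow> 'a \<Rightarrow> real" where
  "ppr N \<alpha> u t = pmf (rwr_pmf N \<alpha> u) t"

text \<open>Forward Push. A state is (reserve, residue). One push at node v.\<close>
type_synonym 'a fp_state = "('a \<Rightarrow> real) \<times> ('a \<Rightarrow> real)"

definition push_enabled :: "'a set \<Rightarrow> ('a \<Rightarrow> 'a set) \<Rightarrow> real \<Rightarrow> 'a fp_state \<Rightarrow> 'a \<Rightarrow> bool" where
  "push_enabled V N rmax st v \<longleftrightarrow> v \<in> V \<and> snd st v / real (card (N v)) > rmax"

definition push :: "('a \<Rightarrow> 'a set) \<Rightarrow> real \<Rightarrow> 'a \<Rightarrow> 'a fp_state \<Rightarrow> 'a fp_state" where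
  "push N \<alpha> v st = (let p = fst st; r = snd st in
     (p(v := p v + \<alpha> * r v),
      \<lambda>u. (if u = v then 0 else r u)
          + (if u \<in> N v then (1 - \<alpha>) * r v / real (card (N v)) else 0)))"

inductive fp_steps :: "'a set \<Rightarrow> ('a \<Rightarrow> 'a set) \<Rightarrow> real \<Rightarrow> real \<Rightarrow> 'a fp_state \<Rightarrow> 'a fp_state \<Rightarrow> bool"
  for V N \<alpha> rmax where
  refl: "fp_steps V N \<alpha> rmax st st"
| step: "push_enabled V N rmax st v \<Longrightarrow> fp_steps V N \<alpha> rmax (push N \<alpha> v st) st'
          \<Longrightarrow> fp_steps V N \<alpha> rmax st st'"

definition fp_init :: "'a \<Rightarrow> 'a fp_state" where
  "fp_init s = ((\<lambda>_. 0), (\<lambda>v. if v = s then 1 else 0))"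

definition forward_push_output ::
  "'a set \<Rightarrow> ('a \<Rightarrow> 'a set) \<Rightarrow> real \<Rightarrow> real \<Rightarrow> 'a \<Rightarrow> 'a fp_state \<Rightarrow> bool" where
  "forward_push_output V N \<alpha> rmax s st \<longleftrightarrow>
     fp_steps V N \<alpha> rmax (fp_init s) st \<and> (\<forall>v\<in>V. \<not> push_enabled V N rmax st v)"

definition r_sum :: "'a set \<Rightarrow> 'a fp_state \<Rightarrow> real" where
  "r_sum V st = (\<Sum>v\<in>V. snd st v)"

definition fora_omega_i :: "'a set \<Rightarrow> real \<Rightarrow> 'a fp_state \<Rightarrow> 'a \<Rightarrow> nat" where
  "fora_omega_i V \<omega> st v = nat \<lceil>snd st v * \<omega> / r_sum V st\<rceil>"

definition fora_a :: "'a set \<Rightarrow> real \<Rightarrow> 'a fp_state \<Rightarrow> 'a \<Rightarrow> real" where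
  "fora_a V \<omega> st v = (snd st v / r_sum V st) * (\<omega> / real (fora_omega_i V \<omega> st v))"

text \<open>Index set of all walks: walk j from node v, for v with positive residue.\<close>
definition fora_walks :: "'a set \<Rightarrow> real \<Rightarrow> 'a fp_state \<Rightarrow> ('a \<times> nat) set" where
  "fora_walks V \<omega> st = {(v, j). v \<in> V \<and> snd st v > 0 \<and> j < fora_omega_i V \<omega> st v}"

definition fora_pmf :: "'a set \<Rightarrow> ('a \<Rightarrow> 'a set) \<Rightarrow> real \<Rightarrow> real \<Rightarrow> 'a fp_state \<Rightarrow> ('a \<Rightarrow> real) pmf" where
  "fora_pmf V N \<alpha> \<omega> st =
     map_pmf (\<lambda>f t. fst st t + (\<Sum>w\<in>fora_walks V \<omega> st.
                   if f w = t then fora_a V \<omega> st (fst w) * r_sum V st / \<omega> else 0))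
       (Pi_pmf (fora_walks V \<omega> st) undefined (\<lambda>w. rwr_pmf N \<alpha> (fst w)))"

end

theory Submission
  imports Defs
begin

(* A push at v moves the mass alpha r(s,v) into the reserve of v and spreads the rest
   over the out-neighbours, exactly as one step of the walk with restart does; so Forward
   Push keeps pi(s,t) = reserve(s,t) + sum_v r(s,v) pi(v,t). Consequently the error
   pi(s,t) - hat_pi(s,t) of FORA is a sum, over the independent walks, of the centred
   variables K (pi(v,t) - [the walk from v ends at t]), where K = r(s,v)/omega_v is at most
   r_sum/omega. Their variances add up to at most (r_sum/omega) pi(s,t), and Bernstein's
   inequality gives the absolute bound; the relative bound is its instance lambda = eps pi(s,t). *)

lemma exp_le_quadratic_nonpos:
  fixes x :: real
  assumes "x \<le> 0"
  shows "exp x \<le> 1 + x + x^2 / 2"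
proof -
  let ?f = "\<lambda>x::real. exp x - 1 - x - x^2 / 2"
  have "?f x \<le> ?f 0"
  proof (rule DERIV_nonneg_imp_nondecreasing[OF assms])
    fix y :: real
    have "(?f has_real_derivative (exp y - 1 - y)) (at y)"
      by (auto intro!: derivative_eq_intros)
    moreover have "0 \<le> exp y - 1 - y"
      using exp_ge_add_one_self[of y] by linarith
    ultimately show "\<exists>d. (?f has_real_derivative d) (at y) \<and> 0 \<le> d"
      by blast
  qed
  then show ?thesis
    by simp
qed

lemma two_mult_three_power_le_fact: "2 * 3 ^ n \<le> (fact (n + 2) :: nat)"
proof (induction n)
  case (Suc n)
  have "2 * 3 ^ Suc n = 3 * (2 * 3 ^ n :: nat)"
    by simp
  also have "\<dots> \<le> (n + 3) * fact (n + 2)"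
    using Suc.IH by (intro mult_mono) auto
  also have "\<dots> = fact (Suc n + 2)"
    by (simp add: algebra_simps)
  finally show ?case .
qed simp

text \<open>The tail of the exponential series is dominated termwise by a geometric series.\<close>
lemma exp_le_quadratic_nonneg:
  fixes x :: real
  assumes "0 \<le> x" "x < 3"
  shows "exp x \<le> 1 + x + x^2 / (2 * (1 - x / 3))"
proof -
  have "(\<lambda>n. x^2 / 2 * (x / 3) ^ n) sums (x^2 / 2 * (1 / (1 - x / 3)))"
    using assms by (intro sums_mult geometric_sums) simp
  then have geometric: "(\<lambda>n. x^2 / 2 * (x / 3) ^ n) sums (x^2 / (2 * (1 - x / 3)))"
    by simp
  have term_le: "inverse (fact (n + 2)) * x ^ (n + 2) \<le> x^2 / 2 * (x / 3) ^ n" for n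
  proof -
    have "real (2 * 3 ^ n) \<le> real (fact (n + 2))"
      by (simp only: of_nat_le_iff two_mult_three_power_le_fact)
    then have "inverse (fact (n + 2)) \<le> inverse (2 * 3 ^ n :: real)"
      unfolding of_nat_fact by (intro le_imp_inverse_le) simp_all
    then have "inverse (fact (n + 2)) * (x ^ n * x^2) \<le> inverse (2 * 3 ^ n) * (x ^ n * x^2)"
      using assms by (intro mult_right_mono) simp_all
    also have "\<dots> = x^2 / 2 * (x / 3) ^ n"
      by (simp add: field_simps power_divide)
    finally show ?thesis
      unfolding power_add by (simp add: ac_simps del: fact_Suc)
  qed
  have "(\<Sum>n. inverse (fact (n + 2)) * x ^ (n + 2)) \<le> (\<Sum>n. x^2 / 2 * (x / 3) ^ n)"
  proof (rule suminf_le)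
    show "summable (\<lambda>n. inverse (fact (n + 2)) * x ^ (n + 2))"
      by (rule summable_exp[THEN summable_ignore_initial_segment])
  qed (use term_le sums_summable[OF geometric] in auto)
  then show ?thesis
    unfolding exp_first_two_terms sums_unique[OF geometric, symmetric] by simp
qed

lemma exp_le_quadratic:
  fixes x u :: real
  assumes "x \<le> u" "0 \<le> u" "u < 3"
  shows "exp x \<le> 1 + x + x^2 / (2 * (1 - u / 3))"
proof (cases "x \<le> 0")
  case True
  have "x^2 / 2 \<le> x^2 / (2 * (1 - u / 3))"
    using assms by (intro divide_left_mono) (auto simp: field_simps)
  then show ?thesis
    using exp_le_quadratic_nonpos[OF True] by linarith
next
  case False
  have "0 < 2 * (1 - x / 3)" "0 < 2 * (1 - u / 3)"
    using assms by auto
  then have "x^2 / (2 * (1 - x / 3)) \<le> x^2 / (2 * (1 - u / 3))"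
    using assms by (intro divide_left_mono mult_pos_pos) auto
  then show ?thesis
    using exp_le_quadratic_nonneg[of x] False assms by linarith
qed

lemma integrable_measure_pmf_bounded:
  fixes f :: "'b \<Rightarrow> real"
  assumes "\<And>x. \<bar>f x\<bar> \<le> B"
  shows "integrable (measure_pmf p) f"
  using assms by (intro measure_pmf.integrable_const_bound[of _ B]) auto

lemma bernstein_mgf_bound:
  fixes p :: "'b pmf" and Y :: "'b \<Rightarrow> real"
  assumes bounded: "\<And>x. \<bar>Y x\<bar> \<le> M"
    and centered: "measure_pmf.expectation p Y = 0"
    and upper: "\<And>x. Y x \<le> b" and "0 \<le> b" and "0 \<le> \<theta>" and "\<theta> * b < 3"
  shows "measure_pmf.expectation p (\<lambda>x. exp (\<theta> * Y x))
           \<le> exp (\<theta>^2 * measure_pmf.expectation p (\<lambda>x. (Y x)^2) / (2 * (1 - \<theta> * b / 3)))"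
proof -
  define c where "c = 1 / (2 * (1 - \<theta> * b / 3))"
  have pointwise: "exp (\<theta> * Y x) \<le> 1 + \<theta> * Y x + c * \<theta>^2 * (Y x)^2" for x
  proof -
    have "\<theta> * Y x \<le> \<theta> * b"
      using upper \<open>0 \<le> \<theta>\<close> by (intro mult_left_mono)
    from exp_le_quadratic[OF this] assms(4-6) show ?thesis
      by (simp add: c_def power_mult_distrib)
  qed
  have int_Y: "integrable (measure_pmf p) Y"
    using bounded by (rule integrable_measure_pmf_bounded)
  have int_Y2: "integrable (measure_pmf p) (\<lambda>x. (Y x)^2)"
    using power_mono[OF bounded abs_ge_zero, of _ 2]
    by (intro integrable_measure_pmf_bounded[of _ "M^2"]) simp
  have int_exp: "integrable (measure_pmf p) (\<lambda>x. exp (\<theta> * Y x))"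
  proof (rule integrable_measure_pmf_bounded[of _ "exp (\<theta> * M)"])
    fix x
    have "\<theta> * Y x \<le> \<theta> * M"
      using bounded[of x] \<open>0 \<le> \<theta>\<close> by (intro mult_left_mono) auto
    then show "\<bar>exp (\<theta> * Y x)\<bar> \<le> exp (\<theta> * M)"
      by simp
  qed
  have "measure_pmf.expectation p (\<lambda>x. exp (\<theta> * Y x))
          \<le> measure_pmf.expectation p (\<lambda>x. 1 + \<theta> * Y x + c * \<theta>^2 * (Y x)^2)"
    using int_exp int_Y int_Y2 pointwise by (intro integral_mono) auto
  also have "\<dots> = 1 + c * \<theta>^2 * measure_pmf.expectation p (\<lambda>x. (Y x)^2)"
    using int_Y int_Y2 centered by simp
  also have "\<dots> \<le> exp (c * \<theta>^2 * measure_pmf.expectation p (\<lambda>x. (Y x)^2))"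
    by (rule exp_ge_add_one_self)
  finally show ?thesis
    by (simp add: c_def)
qed

lemma Pi_pmf_chernoff_bound:
  fixes Y :: "'i \<Rightarrow> 'b \<Rightarrow> real"
  assumes "finite I" and bounded: "\<And>i x. i \<in> I \<Longrightarrow> \<bar>Y i x\<bar> \<le> M" and "0 \<le> \<theta>"
  shows "measure_pmf.prob (Pi_pmf I d p) {f. lam \<le> (\<Sum>i\<in>I. Y i (f i))}
           \<le> exp (- \<theta> * lam) * (\<Prod>i\<in>I. measure_pmf.expectation (p i) (\<lambda>x. exp (\<theta> * Y i x)))"
proof -
  let ?P = "Pi_pmf I d p" and ?S = "\<lambda>f. \<Sum>i\<in>I. Y i (f i)"
  have exp_bounded: "\<bar>exp (\<theta> * Y i x)\<bar> \<le> exp (\<theta> * M)" if "i \<in> I" for i x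
    using bounded[OF that, of x] \<open>0 \<le> \<theta>\<close> by (simp add: mult_left_mono)
  have S_bounded: "\<bar>?S f\<bar> \<le> (\<Sum>i\<in>I. M)" for f
    using bounded by (intro order.trans[OF sum_abs] sum_mono)
  have exp_S_bounded: "\<bar>exp (\<theta> * (?S f - lam))\<bar> \<le> exp (\<theta> * (card I * M + \<bar>lam\<bar>))" for f
  proof -
    have "?S f - lam \<le> card I * M + \<bar>lam\<bar>"
      using abs_le_D1[OF S_bounded[of f]] abs_ge_minus_self[of lam] by simp
    then show ?thesis
      using \<open>0 \<le> \<theta>\<close> by (simp add: mult_left_mono)
  qed
  have "measure_pmf.prob ?P {f. lam \<le> ?S f} = measure_pmf.expectation ?P (indicator {f. lam \<le> ?S f})"
    by simp
  also have "\<dots> \<le> measure_pmf.expectation ?P (\<lambda>f. exp (\<theta> * (?S f - lam)))"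
    using \<open>0 \<le> \<theta>\<close> exp_S_bounded
    by (intro integral_mono integrable_measure_pmf_bounded[of _ 1]
        integrable_measure_pmf_bounded[of _ "exp (\<theta> * (card I * M + \<bar>lam\<bar>))"])
      (auto simp: indicator_def)
  also have "(\<lambda>f. exp (\<theta> * (?S f - lam))) = (\<lambda>f. exp (- \<theta> * lam) * (\<Prod>i\<in>I. exp (\<theta> * Y i (f i))))"
    by (simp add: exp_sum[OF \<open>finite I\<close>, symmetric] sum_distrib_left algebra_simps flip: exp_add)
  also have "measure_pmf.expectation ?P \<dots>
               = exp (- \<theta> * lam) * measure_pmf.expectation ?P (\<lambda>f. \<Prod>i\<in>I. exp (\<theta> * Y i (f i)))"
    by simp
  also have "measure_pmf.expectation ?P (\<lambda>f. \<Prod>i\<in>I. exp (\<theta> * Y i (f i)))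
               = (\<Prod>i\<in>I. measure_pmf.expectation (p i) (\<lambda>x. exp (\<theta> * Y i x)))"
    by (rule expectation_prod_Pi_pmf[OF \<open>finite I\<close>])
      (auto intro: integrable_measure_pmf_bounded exp_bounded)
  finally show ?thesis .
qed

text \<open>The choice \<open>\<theta> = \<lambda> / (S + b\<lambda>/3)\<close> degenerates to \<open>\<theta>b = 3\<close> for \<open>S = 0\<close>;
  then \<open>\<theta> = 3/(2b)\<close> is taken instead.\<close>
lemma bernstein_exponent:
  fixes S b lam :: real
  assumes "0 \<le> S" "0 < b" "0 < lam"
  obtains \<theta> where "0 \<le> \<theta>" "\<theta> * b < 3"
    "- \<theta> * lam + \<theta>^2 * S / (2 * (1 - \<theta> * b / 3)) = - (lam^2) / (2 * (S + b * lam / 3))"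
proof (cases "S = 0")
  case True
  show thesis
    by (rule that[of "3 / (2 * b)"]) (use assms True in \<open>simp_all add: field_simps power2_eq_square\<close>)
next
  case False
  define D where "D = S + b * lam / 3"
  have "0 < S"
    using assms False by simp
  have "0 < D"
    unfolding D_def using \<open>0 < S\<close> mult_pos_pos[OF assms(2,3)] by linarith
  show thesis
  proof (rule that[of "lam / D"])
    show "0 \<le> lam / D" "lam / D * b < 3"
      using assms \<open>0 < S\<close> \<open>0 < D\<close> by (simp_all add: D_def field_simps)
    have denominator: "1 - lam / D * b / 3 = S / D"
      using \<open>0 < D\<close> by (simp add: field_simps) (simp add: D_def algebra_simps)
    show "- (lam / D) * lam + (lam / D)^2 * S / (2 * (1 - lam / D * b / 3))
                 = - (lam^2) / (2 * (S + b * lam / 3))"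
      unfolding denominator D_def[symmetric] using \<open>0 < S\<close> \<open>0 < D\<close> by (simp add: field_simps power2_eq_square)
  qed
qed

theorem bernstein_Pi_pmf:
  fixes Y :: "'i \<Rightarrow> 'b \<Rightarrow> real" and p :: "'i \<Rightarrow> 'b pmf"
  assumes "finite I"
    and bounded: "\<And>i x. i \<in> I \<Longrightarrow> \<bar>Y i x\<bar> \<le> M"
    and upper: "\<And>i x. i \<in> I \<Longrightarrow> Y i x \<le> b"
    and centered: "\<And>i. i \<in> I \<Longrightarrow> measure_pmf.expectation (p i) (Y i) = 0"
    and variance: "(\<Sum>i\<in>I. measure_pmf.expectation (p i) (\<lambda>x. (Y i x)^2)) \<le> S"
    and "0 < b" "0 < lam"
  shows "measure_pmf.prob (Pi_pmf I d p) {f. lam \<le> (\<Sum>i\<in>I. Y i (f i))}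
           \<le> exp (- (lam^2) / (2 * (S + b * lam / 3)))"
proof -
  let ?V = "\<lambda>i. measure_pmf.expectation (p i) (\<lambda>x. (Y i x)^2)"
  have "0 \<le> S"
    using variance by (meson order.trans sum_nonneg Bochner_Integration.integral_nonneg zero_le_power2)
  then obtain \<theta> where "0 \<le> \<theta>" "\<theta> * b < 3"
    and exponent: "- \<theta> * lam + \<theta>^2 * S / (2 * (1 - \<theta> * b / 3)) = - (lam^2) / (2 * (S + b * lam / 3))"
    using bernstein_exponent \<open>0 < b\<close> \<open>0 < lam\<close> by blast
  have denominator: "0 < 2 * (1 - \<theta> * b / 3)"
    using \<open>\<theta> * b < 3\<close> by simp
  have "measure_pmf.prob (Pi_pmf I d p) {f. lam \<le> (\<Sum>i\<in>I. Y i (f i))}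
          \<le> exp (- \<theta> * lam) * (\<Prod>i\<in>I. measure_pmf.expectation (p i) (\<lambda>x. exp (\<theta> * Y i x)))"
    using \<open>finite I\<close> bounded \<open>0 \<le> \<theta>\<close> by (rule Pi_pmf_chernoff_bound)
  also have "\<dots> \<le> exp (- \<theta> * lam) * (\<Prod>i\<in>I. exp (\<theta>^2 * ?V i / (2 * (1 - \<theta> * b / 3))))"
    using bernstein_mgf_bound[OF bounded centered upper] \<open>0 < b\<close> \<open>0 \<le> \<theta>\<close> \<open>\<theta> * b < 3\<close>
    by (intro mult_left_mono prod_mono conjI Bochner_Integration.integral_nonneg) auto
  also have "\<dots> = exp (- \<theta> * lam + \<theta>^2 * (\<Sum>i\<in>I. ?V i) / (2 * (1 - \<theta> * b / 3)))"
    by (simp add: exp_sum[OF \<open>finite I\<close>] exp_add exp_diff exp_minus sum_distrib_left sum_divide_distrib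
        field_simps)
  also have "\<dots> \<le> exp (- \<theta> * lam + \<theta>^2 * S / (2 * (1 - \<theta> * b / 3)))"
    using variance denominator by (simp add: divide_right_mono mult_left_mono)
  finally show ?thesis
    unfolding exponent .
qed

corollary bernstein_abs_Pi_pmf:
  fixes Y :: "'i \<Rightarrow> 'b \<Rightarrow> real" and p :: "'i \<Rightarrow> 'b pmf"
  assumes "finite I"
    and bounded: "\<And>i x. i \<in> I \<Longrightarrow> \<bar>Y i x\<bar> \<le> b"
    and centered: "\<And>i. i \<in> I \<Longrightarrow> measure_pmf.expectation (p i) (Y i) = 0"
    and variance: "(\<Sum>i\<in>I. measure_pmf.expectation (p i) (\<lambda>x. (Y i x)^2)) \<le> S"
    and "0 < b" "0 < lam"
  shows "measure_pmf.prob (Pi_pmf I d p) {f. lam \<le> \<bar>\<Sum>i\<in>I. Y i (f i)\<bar>}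
           \<le> 2 * exp (- (lam^2) / (2 * (S + b * lam / 3)))"
proof -
  let ?P = "Pi_pmf I d p" and ?B = "exp (- (lam^2) / (2 * (S + b * lam / 3)))"
  have "{f. lam \<le> \<bar>\<Sum>i\<in>I. Y i (f i)\<bar>}
          \<subseteq> {f. lam \<le> (\<Sum>i\<in>I. Y i (f i))} \<union> {f. lam \<le> (\<Sum>i\<in>I. - Y i (f i))}"
    by (auto simp: sum_negf abs_if)
  then have "measure_pmf.prob ?P {f. lam \<le> \<bar>\<Sum>i\<in>I. Y i (f i)\<bar>}
               \<le> measure_pmf.prob ?P {f. lam \<le> (\<Sum>i\<in>I. Y i (f i))}
                 + measure_pmf.prob ?P {f. lam \<le> (\<Sum>i\<in>I. - Y i (f i))}"
    by (intro order.trans[OF measure_pmf.finite_measure_mono measure_subadditive]) simp_all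
  moreover have "measure_pmf.prob ?P {f. lam \<le> (\<Sum>i\<in>I. Y i (f i))} \<le> ?B"
    using assms by (intro bernstein_Pi_pmf[where M = b]) (auto simp: abs_le_iff)
  moreover have "measure_pmf.prob ?P {f. lam \<le> (\<Sum>i\<in>I. - Y i (f i))} \<le> ?B"
    using assms by (intro bernstein_Pi_pmf[where M = b]) (auto simp: abs_le_iff)
  ultimately show ?thesis
    by simp
qed

lemma rwr_pmf_unfold:
  assumes "0 < \<alpha>" "\<alpha> \<le> 1"
  shows "rwr_pmf N \<alpha> v = bind_pmf (bernoulli_pmf \<alpha>)
           (\<lambda>b. if b then return_pmf v else bind_pmf (pmf_of_set (N v)) (rwr_pmf N \<alpha>))"
proof -
  have "rwr_pmf N \<alpha> v = bind_pmf (bernoulli_pmf \<alpha>)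
          (\<lambda>b. bind_pmf (if b then return_pmf 0 else map_pmf Suc (geometric_pmf \<alpha>)) (\<lambda>k. walk_pmf N k v))"
    unfolding rwr_pmf_def using assms by (subst geometric_bind_pmf_unfold) (auto simp: bind_assoc_pmf)
  also have "\<dots> = bind_pmf (bernoulli_pmf \<alpha>)
          (\<lambda>b. if b then return_pmf v else bind_pmf (pmf_of_set (N v)) (rwr_pmf N \<alpha>))"
  proof (intro bind_pmf_cong HOL.refl)
    fix b :: bool
    have "bind_pmf (geometric_pmf \<alpha>) (\<lambda>k. bind_pmf (pmf_of_set (N v)) (walk_pmf N k))
            = bind_pmf (pmf_of_set (N v)) (rwr_pmf N \<alpha>)"
      unfolding rwr_pmf_def by (rule bind_commute_pmf)
    then show "bind_pmf (if b then return_pmf 0 else map_pmf Suc (geometric_pmf \<alpha>)) (\<lambda>k. walk_pmf N k v)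
                 = (if b then return_pmf v else bind_pmf (pmf_of_set (N v)) (rwr_pmf N \<alpha>))"
      by (simp add: bind_return_pmf bind_map_pmf)
  qed
  finally show ?thesis .
qed

lemma ppr_unfold:
  assumes "finite (N v)" "N v \<noteq> {}" "0 < \<alpha>" "\<alpha> \<le> 1"
  shows "ppr N \<alpha> v t = \<alpha> * (if v = t then 1 else 0)
           + (1 - \<alpha>) * (\<Sum>u\<in>N v. ppr N \<alpha> u t) / card (N v)"
  unfolding ppr_def rwr_pmf_unfold[OF assms(3,4), of N v] pmf_bind using assms
  by (simp add: pmf_bind_pmf_of_set pmf_return indicator_def)

definition fp_invariant :: "'a set \<Rightarrow> ('a \<Rightarrow> 'a set) \<Rightarrow> real \<Rightarrow> 'a \<Rightarrow> 'a fp_state \<Rightarrow> bool" where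
  "fp_invariant V N \<alpha> s st \<longleftrightarrow> (\<forall>v. 0 \<le> fst st v) \<and> (\<forall>v. 0 \<le> snd st v)
     \<and> (\<forall>t. fst st t + (\<Sum>v\<in>V. snd st v * ppr N \<alpha> v t) = ppr N \<alpha> s t)"

lemma fp_invariant_init:
  assumes "finite V" "s \<in> V"
  shows "fp_invariant V N \<alpha> s (fp_init s)"
  using assms by (simp add: fp_invariant_def fp_init_def if_distrib if_distribR sum.delta cong: if_cong)

lemma push_residue_weighted_sum:
  assumes "finite V" "v \<in> V" "N v \<subseteq> V" "N v \<noteq> {}" "0 < \<alpha>" "\<alpha> \<le> 1"
  shows "(\<Sum>u\<in>V. snd (push N \<alpha> v st) u * ppr N \<alpha> u t)
           = (\<Sum>u\<in>V. snd st u * ppr N \<alpha> u t) - \<alpha> * snd st v * (if v = t then 1 else 0)"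
proof -
  let ?q = "\<lambda>u. ppr N \<alpha> u t" and ?r = "snd st"
  define c where "c = (1 - \<alpha>) * ?r v / card (N v)"
  have "finite (N v)"
    using assms(1,3) by (rule finite_subset[rotated])
  have "snd (push N \<alpha> v st) u * ?q u
          = ?r u * ?q u - (if u = v then ?r u * ?q u else 0) + (if u \<in> N v then c * ?q u else 0)" for u
    by (simp add: push_def Let_def c_def algebra_simps)
  then have "(\<Sum>u\<in>V. snd (push N \<alpha> v st) u * ?q u)
          = (\<Sum>u\<in>V. ?r u * ?q u) - (\<Sum>u\<in>V. if u = v then ?r u * ?q u else 0)
            + (\<Sum>u\<in>V. if u \<in> N v then c * ?q u else 0)"
    by (simp add: sum.distrib sum_subtractf)
  also have "(\<Sum>u\<in>V. if u = v then ?r u * ?q u else 0) = ?r v * ?q v"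
    using assms(1,2) by simp
  also have "(\<Sum>u\<in>V. if u \<in> N v then c * ?q u else 0) = c * (\<Sum>u\<in>N v. ?q u)"
    using assms(1,3) by (simp add: sum.inter_restrict[symmetric] sum_distrib_left Int_absorb1)
  also have "c * (\<Sum>u\<in>N v. ?q u) = ?r v * ((1 - \<alpha>) * (\<Sum>u\<in>N v. ?q u) / card (N v))"
    by (simp add: c_def)
  also have "(1 - \<alpha>) * (\<Sum>u\<in>N v. ?q u) / card (N v) = ?q v - \<alpha> * (if v = t then 1 else 0)"
    using ppr_unfold[of N v \<alpha> t] \<open>finite (N v)\<close> assms(4-6) by simp
  finally show ?thesis
    by (simp add: algebra_simps)
qed

lemma fp_invariant_push:
  assumes "digraph_ok V N" "0 < \<alpha>" "\<alpha> \<le> 1" "v \<in> V" and invariant: "fp_invariant V N \<alpha> s st"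
  shows "fp_invariant V N \<alpha> s (push N \<alpha> v st)"
proof -
  have "finite V" "N v \<subseteq> V" "N v \<noteq> {}"
    using assms(1,4) by (auto simp: digraph_ok_def)
  note residue_sum = push_residue_weighted_sum[of V v N \<alpha> st, OF this(1) assms(4) this(2,3) assms(2,3)]
  have reserve: "fst (push N \<alpha> v st) t = fst st t + \<alpha> * snd st v * (if v = t then 1 else 0)" for t
    by (simp add: push_def Let_def)
  have residue: "snd (push N \<alpha> v st) u = (if u = v then 0 else snd st u)
                   + (if u \<in> N v then (1 - \<alpha>) * snd st v / card (N v) else 0)" for u
    by (simp add: push_def Let_def)
  have "0 \<le> fst (push N \<alpha> v st) t" "0 \<le> snd (push N \<alpha> v st) t" for t
    using invariant assms(2,3) unfolding reserve residue fp_invariant_def by simp_all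
  moreover have "fst (push N \<alpha> v st) t + (\<Sum>u\<in>V. snd (push N \<alpha> v st) u * ppr N \<alpha> u t) = ppr N \<alpha> s t" for t
    using invariant unfolding reserve residue_sum fp_invariant_def by simp
  ultimately show ?thesis
    by (simp add: fp_invariant_def)
qed

lemma fp_invariant_steps:
  assumes "fp_steps V N \<alpha> rmax st st'" "digraph_ok V N" "0 < \<alpha>" "\<alpha> \<le> 1" "fp_invariant V N \<alpha> s st"
  shows "fp_invariant V N \<alpha> s st'"
  using assms
  by (induction rule: fp_steps.induct) (auto simp: push_enabled_def intro: fp_invariant_push)

lemma measure_pmf_expectation_if_eq:
  fixes A B :: real
  shows "measure_pmf.expectation p (\<lambda>x. if x = t then A else B) = A * pmf p t + B * (1 - pmf p t)"
proof -
  have "(\<lambda>x. if x = t then A else B) = (\<lambda>x. B + (A - B) * indicator {t} x)"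
    by (auto simp: indicator_def)
  moreover have "integrable (measure_pmf p) (indicator {t} :: _ \<Rightarrow> real)"
    by (rule integrable_measure_pmf_bounded[of _ 1]) (simp add: indicator_def)
  ultimately show ?thesis
    by (simp add: measure_pmf_single algebra_simps)
qed

lemma expectation_centered_indicator:
  fixes c :: real
  shows "measure_pmf.expectation p (\<lambda>x. c * pmf p t - (if x = t then c else 0)) = 0"
proof -
  have "(\<lambda>x. c * pmf p t - (if x = t then c else 0)) = (\<lambda>x. if x = t then c * pmf p t - c else c * pmf p t)"
    by auto
  then show ?thesis
    by (simp add: measure_pmf_expectation_if_eq algebra_simps)
qed

lemma expectation_centered_indicator_squared:
  fixes c :: real
  shows "measure_pmf.expectation p (\<lambda>x. (c * pmf p t - (if x = t then c else 0))^2)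
           = c^2 * pmf p t * (1 - pmf p t)"
proof -
  have "(\<lambda>x. (c * pmf p t - (if x = t then c else 0))^2)
          = (\<lambda>x. if x = t then (c * pmf p t - c)^2 else (c * pmf p t)^2)"
    by auto
  then show ?thesis
    by (simp add: measure_pmf_expectation_if_eq power2_eq_square algebra_simps)
qed

lemma abs_centered_indicator_le:
  fixes c :: real
  assumes "0 \<le> c"
  shows "\<bar>c * pmf p t - (if x = t then c else 0)\<bar> \<le> c"
proof -
  have "0 \<le> c * pmf p t" "c * pmf p t \<le> c"
    using assms by (simp_all add: mult_left_le pmf_le_1)
  then show ?thesis
    by (simp add: abs_le_iff)
qed

lemma expectation_centered_indicator_squared_le:
  fixes c :: real
  assumes "0 \<le> c" "c \<le> b"
  shows "measure_pmf.expectation p (\<lambda>x. (c * pmf p t - (if x = t then c else 0))^2) \<le> b * (c * pmf p t)"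
proof -
  have "c * pmf p t * (1 - pmf p t) \<le> c * pmf p t"
    using assms by (simp add: mult_left_le)
  then have "c * (c * pmf p t * (1 - pmf p t)) \<le> b * (c * pmf p t)"
    by (rule mult_mono[OF assms(2)]) (use assms in \<open>simp_all add: pmf_le_1\<close>)
  then show ?thesis
    unfolding expectation_centered_indicator_squared by (simp add: power2_eq_square mult.assoc)
qed

definition fora_increment :: "'a set \<Rightarrow> real \<Rightarrow> 'a fp_state \<Rightarrow> 'a \<Rightarrow> real" where
  "fora_increment V \<omega> st v = fora_a V \<omega> st v * r_sum V st / \<omega>"

lemma fora_pmf_eq:
  "fora_pmf V N \<alpha> \<omega> st =
     map_pmf (\<lambda>f t. fst st t + (\<Sum>w\<in>fora_walks V \<omega> st. if f w = t then fora_increment V \<omega> st (fst w) else 0))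
       (Pi_pmf (fora_walks V \<omega> st) undefined (\<lambda>w. rwr_pmf N \<alpha> (fst w)))"
  unfolding fora_pmf_def fora_increment_def ..

lemma fora_increment_eq:
  assumes "r_sum V st \<noteq> 0" "\<omega> \<noteq> 0"
  shows "fora_increment V \<omega> st v = snd st v / fora_omega_i V \<omega> st v"
  using assms by (simp add: fora_increment_def fora_a_def)

lemma fora_omega_i_pos:
  assumes "0 < r_sum V st" "0 < \<omega>" "0 < snd st v"
  shows "0 < fora_omega_i V \<omega> st v"
  using assms by (simp add: fora_omega_i_def)

lemma fora_increment_le:
  assumes "0 < r_sum V st" "0 < \<omega>" "0 \<le> snd st v"
  shows "fora_increment V \<omega> st v \<le> r_sum V st / \<omega>"
proof (cases "fora_omega_i V \<omega> st v = 0")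
  case False
  have "snd st v * \<omega> / r_sum V st \<le> fora_omega_i V \<omega> st v"
    unfolding fora_omega_i_def by (rule real_nat_ceiling_ge)
  then show ?thesis
    using assms False by (simp add: fora_increment_eq field_simps)
qed (use assms in \<open>simp add: fora_increment_eq\<close>)

lemma finite_fora_walks: "finite V \<Longrightarrow> finite (fora_walks V \<omega> st)"
  by (rule finite_subset[of _ "V \<times> (\<Union>v\<in>V. {..<fora_omega_i V \<omega> st v})"])
    (auto simp: fora_walks_def)

lemma sum_fora_walks_increment:
  assumes "finite V" "0 < r_sum V st" "0 < \<omega>" "\<And>v. v \<in> V \<Longrightarrow> 0 \<le> snd st v"
  shows "(\<Sum>w\<in>fora_walks V \<omega> st. fora_increment V \<omega> st (fst w) * g (fst w)) = (\<Sum>v\<in>V. snd st v * g v)"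
proof -
  let ?A = "{v \<in> V. 0 < snd st v}"
  have walks: "fora_walks V \<omega> st = Sigma ?A (\<lambda>v. {..<fora_omega_i V \<omega> st v})"
    by (auto simp: fora_walks_def)
  have "(\<Sum>w\<in>fora_walks V \<omega> st. fora_increment V \<omega> st (fst w) * g (fst w))
          = (\<Sum>v\<in>?A. \<Sum>j<fora_omega_i V \<omega> st v. fora_increment V \<omega> st v * g v)"
    unfolding walks using assms(1) by (subst sum.Sigma) (auto simp: split_beta)
  also have "\<dots> = (\<Sum>v\<in>?A. fora_omega_i V \<omega> st v * (fora_increment V \<omega> st v * g v))"
    by simp
  also have "\<dots> = (\<Sum>v\<in>?A. snd st v * g v)"
    using assms fora_omega_i_pos[OF assms(2,3)] by (intro sum.cong) (auto simp: fora_increment_eq)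
  also have "\<dots> = (\<Sum>v\<in>V. snd st v * g v)"
    using assms by (intro sum.mono_neutral_left) (auto simp: order.order_iff_strict)
  finally show ?thesis .
qed

lemma prob_fora_error_eq_Pi_pmf:
  assumes "finite V" "0 < \<omega>" "0 < r_sum V st" and invariant: "fp_invariant V N \<alpha> s st"
  shows "measure_pmf.prob (fora_pmf V N \<alpha> \<omega> st) {est. lam \<le> \<bar>ppr N \<alpha> s t - est t\<bar>}
           = measure_pmf.prob (Pi_pmf (fora_walks V \<omega> st) undefined (\<lambda>w. rwr_pmf N \<alpha> (fst w)))
               {f. lam \<le> \<bar>\<Sum>w\<in>fora_walks V \<omega> st. fora_increment V \<omega> st (fst w) * pmf (rwr_pmf N \<alpha> (fst w)) t
                                               - (if f w = t then fora_increment V \<omega> st (fst w) else 0)\<bar>}"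
proof -
  let ?K = "\<lambda>w. fora_increment V \<omega> st (fst w)"
  have "0 \<le> snd st v" and ppr_eq: "fst st t + (\<Sum>v\<in>V. snd st v * ppr N \<alpha> v t) = ppr N \<alpha> s t" for v
    using invariant by (auto simp: fp_invariant_def)
  then have "(\<Sum>w\<in>fora_walks V \<omega> st. ?K w * pmf (rwr_pmf N \<alpha> (fst w)) t) = ppr N \<alpha> s t - fst st t"
    using sum_fora_walks_increment[OF assms(1,3,2), of "\<lambda>v. ppr N \<alpha> v t"] by (simp add: ppr_def)
  then have "ppr N \<alpha> s t - (fst st t + (\<Sum>w\<in>fora_walks V \<omega> st. if f w = t then ?K w else 0))
               = (\<Sum>w\<in>fora_walks V \<omega> st. ?K w * pmf (rwr_pmf N \<alpha> (fst w)) t - (if f w = t then ?K w else 0))"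
    for f by (simp add: sum_subtractf)
  then show ?thesis
    unfolding fora_pmf_eq by simp
qed

lemma fora_abs_error_tail:
  assumes "finite V" "0 < \<omega>" "0 < r_sum V st" "0 < lam" and invariant: "fp_invariant V N \<alpha> s st"
  shows "measure_pmf.prob (fora_pmf V N \<alpha> \<omega> st) {est. \<bar>ppr N \<alpha> s t - est t\<bar> \<ge> lam}
           \<le> 2 * exp (- (lam^2 * \<omega>) / (r_sum V st * (2 * ppr N \<alpha> s t + 2 * lam / 3)))"
proof -
  define W where "W = fora_walks V \<omega> st"
  define K where "K w = fora_increment V \<omega> st (fst w)" for w :: "'a \<times> nat"
  define Y where "Y w x = K w * pmf (rwr_pmf N \<alpha> (fst w)) t - (if x = t then K w else 0)" for w x
  define b where "b = r_sum V st / \<omega>"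
  have residue: "0 \<le> snd st v" and "0 \<le> fst st t"
    and ppr_eq: "fst st t + (\<Sum>v\<in>V. snd st v * ppr N \<alpha> v t) = ppr N \<alpha> s t" for v
    using invariant by (auto simp: fp_invariant_def)
  have "0 < b"
    using assms(2,3) by (simp add: b_def)
  have K: "0 \<le> K w" "K w \<le> b" for w
    using assms(2,3) residue fora_increment_le[OF assms(3,2) residue]
    by (simp_all add: K_def b_def fora_increment_eq)
  have "measure_pmf.prob (fora_pmf V N \<alpha> \<omega> st) {est. \<bar>ppr N \<alpha> s t - est t\<bar> \<ge> lam}
          = measure_pmf.prob (Pi_pmf W undefined (\<lambda>w. rwr_pmf N \<alpha> (fst w))) {f. lam \<le> \<bar>\<Sum>w\<in>W. Y w (f w)\<bar>}"
    unfolding prob_fora_error_eq_Pi_pmf[OF assms(1-3) invariant] W_def Y_def K_def ..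
  also have "\<dots> \<le> 2 * exp (- (lam^2) / (2 * (b * ppr N \<alpha> s t + b * lam / 3)))"
  proof (rule bernstein_abs_Pi_pmf)
    show "finite W"
      using assms(1) by (simp add: W_def finite_fora_walks)
    show "\<bar>Y w x\<bar> \<le> b" for w x
      unfolding Y_def using abs_centered_indicator_le[OF K(1)] K(2) by (rule order_trans)
    show "measure_pmf.expectation (rwr_pmf N \<alpha> (fst w)) (Y w) = 0" for w
      unfolding Y_def[abs_def] by (rule expectation_centered_indicator)
    have "(\<Sum>w\<in>W. measure_pmf.expectation (rwr_pmf N \<alpha> (fst w)) (\<lambda>x. (Y w x)^2))
            \<le> (\<Sum>w\<in>W. b * (K w * pmf (rwr_pmf N \<alpha> (fst w)) t))"
      unfolding Y_def using K by (intro sum_mono expectation_centered_indicator_squared_le)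
    also have "\<dots> = b * (ppr N \<alpha> s t - fst st t)"
      using sum_fora_walks_increment[OF assms(1,3,2) residue, of "\<lambda>v. ppr N \<alpha> v t"] ppr_eq
      by (simp add: sum_distrib_left[symmetric] W_def K_def ppr_def)
    also have "\<dots> \<le> b * ppr N \<alpha> s t"
      using \<open>0 \<le> fst st t\<close> \<open>0 < b\<close> by (simp add: algebra_simps)
    finally show "(\<Sum>w\<in>W. measure_pmf.expectation (rwr_pmf N \<alpha> (fst w)) (\<lambda>x. (Y w x)^2))
                    \<le> b * ppr N \<alpha> s t" .
  qed (use \<open>0 < b\<close> assms(4) in auto)
  also have "- (lam^2) / (2 * (b * ppr N \<alpha> s t + b * lam / 3))
               = - (lam^2 * \<omega>) / (r_sum V st * (2 * ppr N \<alpha> s t + 2 * lam / 3))"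
    using assms(2) by (simp add: b_def field_simps)
  finally show ?thesis .
qed

lemma fora_rel_error_tail:
  assumes "finite V" "0 < \<omega>" "0 < r_sum V st" "0 < \<epsilon>" and invariant: "fp_invariant V N \<alpha> s st"
  shows "measure_pmf.prob (fora_pmf V N \<alpha> \<omega> st) {est. \<bar>ppr N \<alpha> s t - est t\<bar> \<ge> \<epsilon> * ppr N \<alpha> s t}
           \<le> 2 * exp (- (\<epsilon>^2 * \<omega> * ppr N \<alpha> s t) / (r_sum V st * (2 + 2 * \<epsilon> / 3)))"
proof (cases "ppr N \<alpha> s t = 0")
  case True
  then show ?thesis
    using measure_pmf.prob_le_1[of "fora_pmf V N \<alpha> \<omega> st"] by (simp add: order_trans[of _ 1 2])
next
  case False
  let ?\<pi> = "ppr N \<alpha> s t"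
  have "0 < ?\<pi>"
    using False by (simp add: ppr_def order_less_le)
  have "(\<epsilon> * ?\<pi>)^2 * \<omega> / (r_sum V st * (2 * ?\<pi> + 2 * (\<epsilon> * ?\<pi>) / 3))
          = (?\<pi> * (\<epsilon>^2 * \<omega> * ?\<pi>)) / (?\<pi> * (r_sum V st * (2 + 2 * \<epsilon> / 3)))"
    by (simp add: power2_eq_square algebra_simps)
  also have "\<dots> = \<epsilon>^2 * \<omega> * ?\<pi> / (r_sum V st * (2 + 2 * \<epsilon> / 3))"
    using \<open>0 < ?\<pi>\<close> by simp
  finally show ?thesis
    using fora_abs_error_tail[OF assms(1-3) _ invariant, where t = t and lam = "\<epsilon> * ?\<pi>"] \<open>0 < ?\<pi>\<close> assms(4)
    by simp
qed

theorem lemma3p2: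
  fixes V :: "'a set" and N :: "'a \<Rightarrow> 'a set"
    and \<alpha> rmax \<omega> \<epsilon> lam :: real and s t :: 'a and st :: "'a fp_state"
  assumes "digraph_ok V N"
    and "0 < \<alpha>" and "\<alpha> < 1"
    and "s \<in> V" and "rmax > 0" and "\<omega> > 0"
    and "forward_push_output V N \<alpha> rmax s st"
    and "t \<in> V" and "\<epsilon> > 0" and "lam > 0"
  shows "(measure_pmf.prob (fora_pmf V N \<alpha> \<omega> st)
           {est. \<bar>ppr N \<alpha> s t - est t\<bar> \<ge> \<epsilon> * ppr N \<alpha> s t}
         \<le> 2 * exp (- (\<epsilon>^2 * \<omega> * ppr N \<alpha> s t) / (r_sum V st * (2 + 2 * \<epsilon> / 3))))
       \<and> (measure_pmf.prob (fora_pmf V N \<alpha> \<omega> st)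
           {est. \<bar>ppr N \<alpha> s t - est t\<bar> \<ge> lam}
         \<le> 2 * exp (- (lam^2 * \<omega>) / (r_sum V st * (2 * ppr N \<alpha> s t + 2 * lam / 3))))"
proof -
  have "finite V"
    using assms(1) by (simp add: digraph_ok_def)
  have "fp_steps V N \<alpha> rmax (fp_init s) st"
    using assms(7) by (simp add: forward_push_output_def)
  then have invariant: "fp_invariant V N \<alpha> s st"
    using assms(1-3) fp_invariant_init[OF \<open>finite V\<close> assms(4)] by (simp add: fp_invariant_steps)
  then have "0 \<le> r_sum V st"
    by (simp add: r_sum_def fp_invariant_def sum_nonneg)
  show ?thesis
  proof (cases "r_sum V st = 0")
    case True
    \<comment> \<open>no residue is left: both bounds read \<open>2 * exp 0\<close>, since \<open>x / 0 = 0\<close>\<close>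
    then show ?thesis
      using measure_pmf.prob_le_1[of "fora_pmf V N \<alpha> \<omega> st"] by (simp add: order_trans[of _ 1 2])
  next
    case False
    then have "0 < r_sum V st"
      using \<open>0 \<le> r_sum V st\<close> by simp
    then show ?thesis
      using fora_rel_error_tail[OF \<open>finite V\<close> assms(6) \<open>0 < r_sum V st\<close> assms(9) invariant]
        fora_abs_error_tail[OF \<open>finite V\<close> assms(6) \<open>0 < r_sum V st\<close> assms(10) invariant]
      by (intro conjI)
  qed
qed

end
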